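(* Let $V$ be a potential on $\Pi^d$ with $|V(x)|\le\log\frac1{|x|}+C$, and let $\bar\rho$ be a bounded probability density on $\Pi^d$. Then for every $\kappa<d$ there is a constant $C_d$ (depending on $d$, $C$ and $\kappa$) such that for all $N$ and all $\rho_N\in\mathcal P(\Pi^{dN})$, $$\int_{\Pi^{dN}}\rho_N\int_{\Pi^{2d}\cap\{x\ne y\}}V(x-y)\,d\mu_N^{\otimes2}\,dX^N\le\frac1\kappa\mathcal H_N(\rho_N|\bar\rho_N)+C_d\|\bar\rho\|_{L^\infty}.$$
   Context: $\mu_N=\frac1N\sum_i\delta_{x_i}$, $\bar\rho_N=\bar\rho^{\otimes N}$, $\mathcal H_N(\rho_N|\bar\rho_N)=\frac1N\int\rho_N\log\frac{\rho_N}{\bar\rho_N}dX^N$. *)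

theory Defs
  imports "HOL-Analysis.Analysis" "HOL-Probability.Probability"
begin

text \<open>The torus \<Pi>^d = R^d / Z^d, represented by the fundamental cell [0,1)^d.\<close>

definition lattice :: "(real ^ 'd) set" where
  "lattice = {k. \<forall>i. k $ i \<in> \<int>}"

definition torus_cell :: "(real ^ 'd::finite) set" where
  "torus_cell = {x. \<forall>i. 0 \<le> x $ i \<and> x $ i < 1}"

definition torus :: "(real ^ 'd::finite) measure" where
  "torus = restrict_space lborel torus_cell"

definition tnorm :: "real ^ 'd::finite \<Rightarrow> real" where
  "tnorm x = infdist x lattice"

definition periodic :: "(real ^ 'd::finite \<Rightarrow> real) \<Rightarrow> bool" where
  "periodic V \<longleftrightarrow> (\<forall>x k. k \<in> lattice \<longrightarrow> V (x + k) = V x)"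

definition config :: "nat \<Rightarrow> (nat \<Rightarrow> real ^ 'd::finite) measure" where
  "config N = PiM {..<N} (\<lambda>_. torus)"

definition tensor_dens :: "nat \<Rightarrow> (real ^ 'd::finite \<Rightarrow> real) \<Rightarrow> (nat \<Rightarrow> real ^ 'd) \<Rightarrow> real" where
  "tensor_dens N \<rho> X = (\<Prod>i<N. \<rho> (X i))"

definition rel_entropy :: "nat \<Rightarrow> ((nat \<Rightarrow> real ^ 'd::finite) \<Rightarrow> real) \<Rightarrow> (real ^ 'd \<Rightarrow> real) \<Rightarrow> real" where
  "rel_entropy N \<rho>N \<rho>bar =
     (1 / real N) * (\<integral>X. \<rho>N X * ln (\<rho>N X / tensor_dens N \<rho>bar X) \<partial>config N)"

text \<open>\<integral>_{x\<noteq>y} V(x-y) d\<mu>_N^{\<otimes>2} with \<mu>_N the empirical measure of X.\<close>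
definition interaction :: "nat \<Rightarrow> (real ^ 'd::finite \<Rightarrow> real) \<Rightarrow> (nat \<Rightarrow> real ^ 'd) \<Rightarrow> real" where
  "interaction N V X =
     (1 / (real N)^2) * (\<Sum>i<N. \<Sum>j<N. if X i \<noteq> X j then V (X i - X j) else 0)"

definition Linf_norm :: "(real ^ 'd::finite \<Rightarrow> real) \<Rightarrow> real" where
  "Linf_norm f = real_of_ereal (esssup torus (\<lambda>x. ereal \<bar>f x\<bar>))"

end

theory Submission
  imports Defs
begin

text \<open>Bound \<open>|V|\<close> by the nonnegative kernel \<open>g(z) = max 0 (ln (1/|z|) + C)\<close> and let \<open>F\<close> be
  \<open>\<kappa> N\<close> times the pair energy of \<open>g\<close>. The Gibbs variational inequality gives
  \<open>\<integral> \<rho>_N F \<le> N H_N(\<rho>_N | \<rho>bar_N) + ln \<integral> \<rho>bar_N exp F\<close>. By Jensen,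
  \<open>exp F \<le> (1/N) \<Sum>_i \<Prod>_{j\<noteq>i} exp (\<kappa> g(x_i - x_j))\<close>, and integrating out the particles \<open>j \<noteq> i\<close>
  first, each factor costs at most \<open>\<parallel>\<rho>bar\<parallel>_\<infinity> A\<close> with \<open>A = sup_y \<integral> exp (\<kappa> g(y - x)) dx\<close>, so that
  \<open>ln \<integral> \<rho>bar_N exp F \<le> (N - 1) ln (\<parallel>\<rho>bar\<parallel>_\<infinity> A) \<le> N \<parallel>\<rho>bar\<parallel>_\<infinity> A\<close>. Finally \<open>A < \<infinity>\<close>:
  \<open>exp (\<kappa> g(z)) \<le> 1 + exp (\<kappa> C) |z|^(-\<kappa>)\<close>, and \<open>|z|^(-\<kappa>)\<close> is bounded by a product over the
  coordinates of periodised one-dimensional singularities \<open>|z_b|^(-\<kappa>/d)\<close>, which are integrable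
  exactly because \<open>\<kappa> < d\<close>.\<close>

text \<open>\<open>|v|\<^sup>-\<^sup>s\<close> with the value \<open>\<infinity>\<close> at \<open>0\<close>, unlike \<open>0 powr -s = 0\<close>, so that it dominates pointwise.\<close>

definition sing_powr :: "real \<Rightarrow> real \<Rightarrow> ennreal" where
  "sing_powr s v = (if v = 0 then \<infinity> else ennreal (\<bar>v\<bar> powr -s))"

lemma sing_powr_measurable [measurable]: "sing_powr s \<in> borel_measurable borel"
  unfolding sing_powr_def by measurable

lemma sing_powr_minus [simp]: "sing_powr s (- v) = sing_powr s v"
  by (simp add: sing_powr_def)

lemma sing_powr_nonzero: "sing_powr s v \<noteq> 0"
  by (simp add: sing_powr_def)

lemma nn_integral_sing_powr_interval:
  assumes "0 \<le> s" "s < 1" "0 \<le> r"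
  shows "(\<integral>\<^sup>+v. indicator {0..r} v * sing_powr s v \<partial>lborel) = ennreal (r powr (1 - s) / (1 - s))"
proof -
  have "(\<integral>\<^sup>+v. indicator {0..r} v * sing_powr s v \<partial>lborel) =
        (\<integral>\<^sup>+v. ennreal (indicator {0..r} v * v powr -s) \<partial>lborel)"
    using AE_lborel_singleton[of 0]
    by (intro nn_integral_cong_AE, eventually_elim) (auto simp: sing_powr_def indicator_def)
  also have "\<dots> = ennreal (r powr (1 - s) / (1 - s))"
    using has_integral_powr_from_0[of "-s" r] assms
    by (intro nn_integral_has_integral_lebesgue) auto
  finally show ?thesis .
qed

lemma nn_integral_sing_powr_symmetric:
  assumes "0 \<le> s" "s < 1" "0 \<le> r"
  shows "(\<integral>\<^sup>+v. indicator {-r..r} v * sing_powr s v \<partial>lborel) \<le> ennreal (2 * (r powr (1 - s) / (1 - s)))"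
proof -
  let ?half = "\<lambda>I. \<integral>\<^sup>+v. indicator I v * sing_powr s v \<partial>lborel"
  have "?half {-r..r} \<le> (\<integral>\<^sup>+v. indicator {0..r} v * sing_powr s v + indicator {-r..0} v * sing_powr s v \<partial>lborel)"
    by (intro nn_integral_mono) (auto simp: indicator_def)
  also have "\<dots> = ?half {0..r} + ?half {-r..0}"
    by (intro nn_integral_add) auto
  also have "?half {-r..0} = ?half {0..r}"
    by (subst nn_integral_real_affine[where c = "-1" and t = 0])
       (auto intro!: nn_integral_cong simp: indicator_def)
  also have "?half {0..r} + ?half {0..r} = ennreal (2 * (r powr (1 - s) / (1 - s)))"
    using assms by (simp add: nn_integral_sing_powr_interval ennreal_plus[symmetric] del: ennreal_plus)
  finally show ?thesis .
qed

lemma nn_integral_sing_powr_unit_interval: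
  assumes "0 \<le> s" "s < 1" "\<bar>a\<bar> + 1 \<le> r"
  shows "(\<integral>\<^sup>+t. indicator {0..1} t * sing_powr s (a - t) \<partial>lborel) \<le> ennreal (2 * (r powr (1 - s) / (1 - s)))"
proof -
  have "(\<integral>\<^sup>+t. indicator {0..1} t * sing_powr s (a - t) \<partial>lborel)
      = (\<integral>\<^sup>+v. indicator {0..1} (a - v) * sing_powr s v \<partial>lborel)"
    by (subst (2) nn_integral_real_affine[where c = "-1" and t = a]) auto
  also have "\<dots> \<le> (\<integral>\<^sup>+v. indicator {-r..r} v * sing_powr s v \<partial>lborel)"
    using assms by (intro nn_integral_mono) (auto simp: indicator_def)
  also have "\<dots> \<le> ennreal (2 * (r powr (1 - s) / (1 - s)))"
    using assms by (intro nn_integral_sing_powr_symmetric) auto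
  finally show ?thesis .
qed

lemma nn_integral_sing_powr_near_integers:
  assumes "0 \<le> s" "s < 1" "\<bar>c\<bar> \<le> 1"
  shows "(\<integral>\<^sup>+t. indicator {0..1} t *
            (sing_powr s (c - t) + sing_powr s (c - t - 1) + sing_powr s (c - t + 1)) \<partial>lborel)
         \<le> ennreal (6 * (3 powr (1 - s) / (1 - s)))"
proof -
  let ?K = "2 * (3 powr (1 - s) / (1 - s))"
  have shift: "(\<integral>\<^sup>+t. indicator {0..1} t * sing_powr s (a - t) \<partial>lborel) \<le> ennreal ?K"
    if "\<bar>a\<bar> \<le> 2" for a
    using assms that by (intro nn_integral_sing_powr_unit_interval) auto
  have "(\<integral>\<^sup>+t. indicator {0..1} t *
            (sing_powr s (c - t) + sing_powr s (c - t - 1) + sing_powr s (c - t + 1)) \<partial>lborel)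
      = (\<integral>\<^sup>+t. indicator {0..1} t * sing_powr s (c - t) \<partial>lborel)
        + (\<integral>\<^sup>+t. indicator {0..1} t * sing_powr s ((c - 1) - t) \<partial>lborel)
        + (\<integral>\<^sup>+t. indicator {0..1} t * sing_powr s ((c + 1) - t) \<partial>lborel)"
    by (simp add: distrib_left diff_diff_eq add.commute add_diff_eq nn_integral_add)
  also have "\<dots> \<le> ennreal ?K + ennreal ?K + ennreal ?K"
    using assms by (intro add_mono shift) auto
  also have "\<dots> = ennreal (6 * (3 powr (1 - s) / (1 - s)))"
    using assms by (simp add: ennreal_plus[symmetric] del: ennreal_plus)
  finally show ?thesis .
qed

lemma inner_Basis_lattice_Ints:
  assumes "k \<in> lattice" "b \<in> (Basis :: (real^'d::finite) set)"
  shows "k \<bullet> b \<in> \<int>"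
  using assms by (auto simp: lattice_def Basis_vec_def inner_axis)

lemma inner_Basis_torus_cell:
  assumes "x \<in> torus_cell" "b \<in> (Basis :: (real^'d::finite) set)"
  shows "0 \<le> x \<bullet> b \<and> x \<bullet> b < 1"
  using assms by (auto simp: torus_cell_def Basis_vec_def inner_axis)

lemma torus_cell_sets [measurable]: "(torus_cell :: (real^'d::finite) set) \<in> sets borel"
  unfolding torus_cell_def by measurable

lemma abs_diff_Ints_ge_min:
  fixes u n :: real
  assumes "\<bar>u\<bar> < 1" "n \<in> \<int>"
  shows "min (min \<bar>u\<bar> \<bar>u - 1\<bar>) \<bar>u + 1\<bar> \<le> \<bar>u - n\<bar>"
proof -
  obtain m :: int where n: "n = of_int m" using assms(2) Ints_cases by blast
  consider "m \<in> {-1, 0, 1}" | "m \<ge> 2" | "m \<le> -2" by fastforce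
  then show ?thesis
  proof cases
    case 2
    then have "n \<ge> 2" unfolding n by simp
    then show ?thesis using assms(1) by auto
  next
    case 3
    then have "n \<le> -2" unfolding n by simp
    then show ?thesis using assms(1) by auto
  qed (auto simp: n)
qed

lemma tnorm_ge_min_coordinate:
  fixes z :: "real^'d::finite"
  assumes "b \<in> Basis" "\<bar>z \<bullet> b\<bar> < 1"
  shows "min (min \<bar>z \<bullet> b\<bar> \<bar>z \<bullet> b - 1\<bar>) \<bar>z \<bullet> b + 1\<bar> \<le> tnorm z"
proof -
  have "min (min \<bar>z \<bullet> b\<bar> \<bar>z \<bullet> b - 1\<bar>) \<bar>z \<bullet> b + 1\<bar> \<le> dist z k" if k: "k \<in> lattice" for k
  proof -
    have "min (min \<bar>z \<bullet> b\<bar> \<bar>z \<bullet> b - 1\<bar>) \<bar>z \<bullet> b + 1\<bar> \<le> \<bar>z \<bullet> b - k \<bullet> b\<bar>"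
      using assms k by (intro abs_diff_Ints_ge_min inner_Basis_lattice_Ints)
    also have "\<dots> \<le> norm (z - k)"
      using Basis_le_norm[OF assms(1), of "z - k"] by (simp add: inner_diff_left)
    finally show ?thesis by (simp add: dist_norm)
  qed
  moreover have "lattice \<noteq> {}"
    by (auto simp: lattice_def intro: exI[of _ 0])
  ultimately show ?thesis
    unfolding tnorm_def infdist_def by (auto intro!: cINF_greatest)
qed

definition log_kernel :: "real \<Rightarrow> real^'d::finite \<Rightarrow> real" where
  "log_kernel C z = max 0 (ln (1 / tnorm z) + C)"

lemma log_kernel_measurable [measurable]: "log_kernel C \<in> borel_measurable (borel :: (real^'d::finite) measure)"
proof -
  have "tnorm \<in> borel_measurable (borel :: (real^'d) measure)"
    unfolding tnorm_def by (intro borel_measurable_continuous_onI continuous_on_infdist continuous_on_id)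
  then show ?thesis
    unfolding log_kernel_def by measurable
qed

lemma sing_powr_le_near_integers:
  fixes z :: "real^'d::finite"
  assumes "0 \<le> s" "b \<in> Basis" "\<bar>z \<bullet> b\<bar> < 1" "0 < tnorm z"
  shows "ennreal (tnorm z powr -s) \<le> sing_powr s (z \<bullet> b) + sing_powr s (z \<bullet> b - 1) + sing_powr s (z \<bullet> b + 1)"
    (is "_ \<le> ?S")
proof -
  define u where "u = z \<bullet> b"
  have summand_le: "sing_powr s v \<le> ?S" if "v \<in> {u, u - 1, u + 1}" for v
    using that by (auto simp: u_def add.assoc add.left_commute[of _ "sing_powr s (z \<bullet> b - 1)"])
  obtain v where v: "v \<in> {u, u - 1, u + 1}" "\<bar>v\<bar> = min (min \<bar>u\<bar> \<bar>u - 1\<bar>) \<bar>u + 1\<bar>"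
    by (metis insert_iff min_def)
  have "\<bar>v\<bar> \<le> tnorm z"
    unfolding v(2) u_def using assms by (intro tnorm_ge_min_coordinate)
  then have "ennreal (tnorm z powr -s) \<le> sing_powr s v"
    using assms by (auto simp: sing_powr_def intro!: ennreal_leI powr_mono2')
  also have "\<dots> \<le> ?S"
    using v(1) by (rule summand_le)
  finally show ?thesis .
qed

lemma exp_log_kernel_le_prod:
  fixes s C :: real and z :: "real^'d::finite"
  assumes s: "0 \<le> s" and z: "\<And>b. b \<in> Basis \<Longrightarrow> \<bar>z \<bullet> b\<bar> < 1"
  shows "ennreal (exp (s * CARD('d) * log_kernel C z))
    \<le> 1 + ennreal (exp (s * CARD('d) * C)) *
        (\<Prod>b\<in>Basis. sing_powr s (z \<bullet> b) + sing_powr s (z \<bullet> b - 1) + sing_powr s (z \<bullet> b + 1))"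
    (is "_ \<le> 1 + ennreal ?c * (\<Prod>b\<in>Basis. ?f b)")
proof (cases "tnorm z = 0")
  case True
  obtain b0 :: "real^'d" where b0: "b0 \<in> Basis"
    using nonempty_Basis by blast
  have "z \<bullet> b0 = 0 \<or> z \<bullet> b0 - 1 = 0 \<or> z \<bullet> b0 + 1 = 0"
    using tnorm_ge_min_coordinate[OF b0 z[OF b0]] True by (auto simp: min_def abs_if split: if_splits)
  then have "?f b0 = \<top>"
    by (auto simp: sing_powr_def)
  then have "(\<Prod>b\<in>Basis. ?f b) = \<top>"
    using b0 by (auto simp: ennreal_prod_eq_top sing_powr_nonzero)
  then show ?thesis
    by (simp add: ennreal_mult_top)
next
  case False
  define t where "t = tnorm z"
  have t: "0 < t"
    using False by (simp add: t_def tnorm_def infdist_nonneg less_le)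
  have "exp (s * CARD('d) * log_kernel C z) \<le> 1 + exp (s * CARD('d) * (ln (1 / t) + C))"
    using s by (auto simp: log_kernel_def t_def max_def)
  also have "exp (s * CARD('d) * (ln (1 / t) + C)) = ?c * (t powr -s) ^ CARD('d)"
    using t by (simp add: powr_def ln_div exp_add[symmetric] exp_of_nat_mult[symmetric] algebra_simps)
  finally have "ennreal (exp (s * CARD('d) * log_kernel C z)) \<le> ennreal (1 + ?c * (t powr -s) ^ CARD('d))"
    by (rule ennreal_leI)
  also have "\<dots> = 1 + ennreal ?c * (\<Prod>b\<in>(Basis::(real^'d) set). ennreal (t powr -s))"
    by (simp add: ennreal_plus ennreal_mult ennreal_power)
  also have "\<dots> \<le> 1 + ennreal ?c * (\<Prod>b\<in>Basis. ?f b)"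
    using s z t unfolding t_def
    by (intro add_left_mono mult_left_mono prod_mono_ennreal sing_powr_le_near_integers) auto
  finally show ?thesis .
qed

lemma exp_log_kernel_shift_le_prod:
  fixes s C :: real and x y :: "real^'d::finite"
  assumes s: "0 \<le> s" and y: "y \<in> torus_cell"
  shows "ennreal (exp (s * CARD('d) * log_kernel C (y - x))) * indicator torus_cell x
    \<le> indicator (cbox 0 One) x + ennreal (exp (s * CARD('d) * C)) *
        (\<Prod>b\<in>Basis. indicator {0..1} (x \<bullet> b) *
           (sing_powr s (y \<bullet> b - x \<bullet> b) + sing_powr s (y \<bullet> b - x \<bullet> b - 1) + sing_powr s (y \<bullet> b - x \<bullet> b + 1)))"
proof (cases "x \<in> torus_cell")
  case True
  have x: "\<And>b. b \<in> Basis \<Longrightarrow> 0 \<le> x \<bullet> b \<and> x \<bullet> b < 1"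
    using True by (rule inner_Basis_torus_cell)
  have "\<And>b. b \<in> Basis \<Longrightarrow> \<bar>(y - x) \<bullet> b\<bar> < 1"
    using x inner_Basis_torus_cell[OF y] by (force simp: inner_diff_left)
  moreover have "x \<in> cbox 0 One"
    using x by (auto simp: mem_box less_imp_le)
  ultimately show ?thesis
    using True x exp_log_kernel_le_prod[OF s, of "y - x" C]
    by (simp add: inner_diff_left less_imp_le cong: prod.cong)
qed simp

lemma nn_integral_exp_log_kernel_le:
  fixes s C :: real and y :: "real^'d::finite"
  assumes s: "0 \<le> s" "s < 1" and y: "y \<in> torus_cell"
  shows "(\<integral>\<^sup>+x. ennreal (exp (s * CARD('d) * log_kernel C (y - x))) \<partial>torus)
    \<le> ennreal (1 + exp (s * CARD('d) * C) * (6 * (3 powr (1 - s) / (1 - s))) ^ CARD('d))"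
proof -
  let ?c = "exp (s * CARD('d) * C)" and ?K = "6 * (3 powr (1 - s) / (1 - s))"
  let ?f = "\<lambda>u. sing_powr s u + sing_powr s (u - 1) + sing_powr s (u + 1)"
  have K: "0 \<le> ?K"
    using s by simp
  have "(\<integral>\<^sup>+x. ennreal (exp (s * CARD('d) * log_kernel C (y - x))) \<partial>torus)
      = (\<integral>\<^sup>+x. ennreal (exp (s * CARD('d) * log_kernel C (y - x))) * indicator torus_cell x \<partial>lborel)"
    unfolding torus_def by (rule nn_integral_restrict_space) simp
  also have "\<dots> \<le> (\<integral>\<^sup>+x. indicator (cbox 0 One) x
                     + ennreal ?c * (\<Prod>b\<in>Basis. indicator {0..1} (x \<bullet> b) * ?f (y \<bullet> b - x \<bullet> b)) \<partial>lborel)"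
    using s(1) y by (intro nn_integral_mono exp_log_kernel_shift_le_prod)
  also have "\<dots> = (\<integral>\<^sup>+x. indicator (cbox 0 One) x \<partial>lborel)
      + ennreal ?c * (\<integral>\<^sup>+x. (\<Prod>b\<in>Basis. indicator {0..1} (x \<bullet> b) * ?f (y \<bullet> b - x \<bullet> b)) \<partial>lborel)"
    by (subst nn_integral_add) (auto intro!: nn_integral_cmult)
  also have "(\<integral>\<^sup>+x. indicator (cbox (0::real^'d) One) x \<partial>lborel) = 1"
    by (simp add: emeasure_lborel_cbox)
  also have "(\<integral>\<^sup>+x. (\<Prod>b\<in>Basis. indicator {0..1} (x \<bullet> b) * ?f (y \<bullet> b - x \<bullet> b)) \<partial>lborel)
      = (\<Prod>b\<in>(Basis::(real^'d) set). \<integral>\<^sup>+t. indicator {0..1} t * ?f (y \<bullet> b - t) \<partial>lborel)"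
    by (rule nn_integral_lborel_prod) auto
  also have "\<dots> \<le> (\<Prod>b\<in>(Basis::(real^'d) set). ennreal ?K)"
    using inner_Basis_torus_cell[OF y] s
    by (intro prod_mono_ennreal order_trans[OF _ nn_integral_sing_powr_near_integers[of s]])
       (auto simp: algebra_simps less_imp_le)
  also have "1 + ennreal ?c * (\<Prod>b\<in>(Basis::(real^'d) set). ennreal ?K) = ennreal (1 + ?c * ?K ^ CARD('d))"
    using K by (simp add: ennreal_plus ennreal_mult ennreal_power)
  finally show ?thesis
    by (simp add: mult_left_mono)
qed

lemma space_torus: "space (torus :: (real^'d::finite) measure) = torus_cell"
  by (simp add: torus_def space_restrict_space)

lemma sigma_finite_torus: "sigma_finite_measure (torus :: (real^'d::finite) measure)"
  unfolding torus_def by (rule sigma_finite_measure_restrict_space[OF sigma_finite_lborel]) simp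

lemma torus_measurable_borel [measurable]: "(\<lambda>x. x) \<in> (torus :: (real^'d::finite) measure) \<rightarrow>\<^sub>M borel"
  unfolding torus_def by (rule measurable_restrict_space1) simp

lemma torus_shift_measurable [measurable]:
  "h \<in> borel_measurable borel \<Longrightarrow> (\<lambda>x. h (y - x)) \<in> borel_measurable (torus :: (real^'d::finite) measure)"
  unfolding torus_def
  by (intro measurable_restrict_space1 measurable_compose[of "\<lambda>x. y - x" _ borel h]) auto

lemma PiM_torus_component_measurable:
  "f \<in> borel_measurable torus \<Longrightarrow> j \<in> I \<Longrightarrow>
    (\<lambda>X. f (X j)) \<in> borel_measurable (Pi\<^sub>M I (\<lambda>_. torus :: (real^'d::finite) measure))"
  by (rule measurable_compose[where f = "\<lambda>X. X j"]) (auto intro: measurable_component_singleton)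

lemma config_component_measurable [measurable]:
  "j < N \<Longrightarrow> (\<lambda>X. X j) \<in> (config N :: (nat \<Rightarrow> real^'d::finite) measure) \<rightarrow>\<^sub>M borel"
  unfolding config_def by (rule PiM_torus_component_measurable[OF torus_measurable_borel]) simp

lemma tensor_dens_measurable [measurable]:
  assumes "\<rho> \<in> borel_measurable (torus :: (real^'d::finite) measure)"
  shows "tensor_dens N \<rho> \<in> borel_measurable (config N)"
  unfolding tensor_dens_def config_def
  by (intro borel_measurable_prod PiM_torus_component_measurable[OF assms]) auto

lemma tensor_dens_nonneg: "(\<And>x. 0 \<le> \<rho> x) \<Longrightarrow> 0 \<le> tensor_dens N \<rho> X"
  unfolding tensor_dens_def by (intro prod_nonneg) auto

lemma nn_integral_density_shift_le:
  fixes \<rho> h :: "real^'d::finite \<Rightarrow> real"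
  assumes M: "AE x in torus. \<rho> x \<le> M" "0 \<le> M" and \<rho>: "\<And>x. 0 \<le> \<rho> x"
    and h: "h \<in> borel_measurable borel" "\<And>z. 0 \<le> h z"
    and A: "(\<integral>\<^sup>+x. h (y - x) \<partial>torus) \<le> ennreal A" "0 \<le> A"
  shows "(\<integral>\<^sup>+x. ennreal (\<rho> x * h (y - x)) \<partial>torus) \<le> ennreal (M * A)"
proof -
  have "(\<integral>\<^sup>+x. ennreal (\<rho> x * h (y - x)) \<partial>torus) \<le> (\<integral>\<^sup>+x. ennreal M * ennreal (h (y - x)) \<partial>torus)"
    using M(1) by (intro nn_integral_mono_AE, eventually_elim)
      (use h(2) \<rho> M(2) in \<open>simp add: ennreal_mult[symmetric] mult_right_mono\<close>)
  also have "\<dots> = ennreal M * (\<integral>\<^sup>+x. ennreal (h (y - x)) \<partial>torus)"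
    using h(1) by (intro nn_integral_cmult) measurable
  also have "\<dots> \<le> ennreal (M * A)"
    using A M(2) by (simp add: ennreal_mult mult_left_mono)
  finally show ?thesis .
qed

text \<open>Conditionally on the position \<open>y\<close> of particle \<open>i\<close>, the other particles are independent,
  and each one contributes at most \<open>M A\<close>.\<close>

lemma nn_integral_tensor_dens_prod_kernel_le:
  fixes \<rho> h :: "real^'d::finite \<Rightarrow> real"
  assumes \<rho>: "\<rho> \<in> borel_measurable torus" "\<And>x. 0 \<le> \<rho> x" "(\<integral>\<^sup>+x. \<rho> x \<partial>torus) = 1"
    and M: "AE x in torus. \<rho> x \<le> M" "0 \<le> M"
    and h: "h \<in> borel_measurable borel" "\<And>z. 0 \<le> h z"
    and A: "\<And>y. y \<in> torus_cell \<Longrightarrow> (\<integral>\<^sup>+x. h (y - x) \<partial>torus) \<le> ennreal A" "0 \<le> A"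
    and i: "i < N"
  shows "(\<integral>\<^sup>+X. tensor_dens N \<rho> X * (\<Prod>j\<in>{..<N}-{i}. h (X i - X j)) \<partial>config N) \<le> ennreal ((M * A) ^ (N - 1))"
proof -
  interpret product_sigma_finite "\<lambda>_. torus :: (real^'d) measure"
    using sigma_finite_torus by (simp add: product_sigma_finite_def)
  define I where "I = {..<N} - {i}"
  have N: "{..<N} = insert i I" "finite I" "i \<notin> I" "card I = N - 1"
    using i by (auto simp: I_def)
  let ?f = "\<lambda>X. ennreal (tensor_dens N \<rho> X * (\<Prod>j\<in>I. h (X i - X j)))"
  have "?f \<in> borel_measurable (Pi\<^sub>M (insert i I) (\<lambda>_. torus))"
    using \<rho>(1) h(1) tensor_dens_measurable[OF \<rho>(1), of N] i unfolding config_def N(1)[symmetric]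
    by (measurable; auto simp: I_def)
  then have "(\<integral>\<^sup>+X. ?f X \<partial>config N) = (\<integral>\<^sup>+y. (\<integral>\<^sup>+x. ?f (x(i := y)) \<partial>Pi\<^sub>M I (\<lambda>_. torus)) \<partial>torus)"
    unfolding config_def N(1) by (rule product_nn_integral_insert_rev[OF N(2,3)])
  also have "\<dots> \<le> (\<integral>\<^sup>+y. ennreal (\<rho> y) * ennreal ((M * A) ^ (N - 1)) \<partial>torus)"
  proof (rule nn_integral_mono)
    fix y :: "real^'d" assume "y \<in> space torus"
    then have y: "y \<in> torus_cell" by (simp add: space_torus)
    have "?f (x(i := y)) = ennreal (\<rho> y) * (\<Prod>j\<in>I. ennreal (\<rho> (x j) * h (y - x j)))" for x
    proof -
      have "tensor_dens N \<rho> (x(i := y)) = \<rho> y * (\<Prod>j\<in>I. \<rho> (x j))"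
        unfolding tensor_dens_def N(1) using N(2,3) by (auto simp: prod.insert intro!: prod.cong)
      moreover have "(\<Prod>j\<in>I. h ((x(i := y)) i - (x(i := y)) j)) = (\<Prod>j\<in>I. h (y - x j))"
        using N(3) by (intro prod.cong) auto
      ultimately show ?thesis
        using \<rho>(2) h(2) by (simp add: prod.distrib ennreal_mult prod_ennreal prod_nonneg mult.assoc)
    qed
    then have "(\<integral>\<^sup>+x. ?f (x(i := y)) \<partial>Pi\<^sub>M I (\<lambda>_. torus))
        = ennreal (\<rho> y) * (\<integral>\<^sup>+x. (\<Prod>j\<in>I. ennreal (\<rho> (x j) * h (y - x j))) \<partial>Pi\<^sub>M I (\<lambda>_. torus))"
      using \<rho>(1) h(1)
      by (simp, intro nn_integral_cmult borel_measurable_prod measurable_compose[OF _ measurable_ennreal]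
          borel_measurable_times PiM_torus_component_measurable) auto
    also have "(\<integral>\<^sup>+x. (\<Prod>j\<in>I. ennreal (\<rho> (x j) * h (y - x j))) \<partial>Pi\<^sub>M I (\<lambda>_. torus))
        = (\<Prod>j\<in>I. \<integral>\<^sup>+t. ennreal (\<rho> t * h (y - t)) \<partial>torus)"
      using N(2) \<rho>(1) h(1)
      by (intro product_nn_integral_prod measurable_compose[OF _ measurable_ennreal] borel_measurable_times)
        (auto intro: measurable_compose[OF torus_measurable_borel])
    also have "\<dots> \<le> (\<Prod>j\<in>I. ennreal (M * A))"
      using M h A(2) \<rho>(2) A(1)[OF y] by (intro prod_mono_ennreal nn_integral_density_shift_le)
    also have "\<dots> = ennreal ((M * A) ^ (N - 1))"
      using M(2) A(2) N(4) by (simp add: ennreal_power)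
    finally show "(\<integral>\<^sup>+x. ?f (x(i := y)) \<partial>Pi\<^sub>M I (\<lambda>_. torus)) \<le> ennreal (\<rho> y) * ennreal ((M * A) ^ (N - 1))"
      by (simp add: fun_upd_def mult_left_mono)
  qed
  also have "\<dots> = ennreal ((M * A) ^ (N - 1))"
    using \<rho>(1,3) by (simp add: nn_integral_multc)
  finally show ?thesis
    by (simp add: I_def)
qed

definition kernel_interaction :: "nat \<Rightarrow> real \<Rightarrow> (nat \<Rightarrow> real^'d::finite) \<Rightarrow> real" where
  "kernel_interaction N C X = (1 / (real N)^2) * (\<Sum>i<N. \<Sum>j\<in>{..<N}-{i}. log_kernel C (X i - X j))"

lemma kernel_interaction_nonneg: "0 \<le> kernel_interaction N C X"
  unfolding kernel_interaction_def log_kernel_def by (intro mult_nonneg_nonneg sum_nonneg) auto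

lemma kernel_interaction_measurable [measurable]:
  "kernel_interaction N C \<in> borel_measurable (config N :: (nat \<Rightarrow> real^'d::finite) measure)"
  unfolding kernel_interaction_def by measurable

lemma exp_average_le_average_exp:
  fixes y :: "nat \<Rightarrow> real"
  assumes "0 < N"
  shows "exp ((1 / real N) * (\<Sum>i<N. y i)) \<le> (1 / real N) * (\<Sum>i<N. exp (y i))"
proof -
  have "exp ((1 / real N) * (\<Sum>i<N. y i)) = exp (\<Sum>i<N. (1 / real N) *\<^sub>R y i)"
    by (simp add: sum_distrib_left)
  also have "\<dots> \<le> (\<Sum>i<N. (1 / real N) * exp (y i))"
    using assms by (intro convex_on_sum[OF _ _ exp_convex]) auto
  finally show ?thesis
    by (simp add: sum_distrib_left)
qed

lemma exp_kernel_interaction_le: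
  assumes "0 < N"
  shows "exp (\<kappa> * N * kernel_interaction N C X)
    \<le> (1 / real N) * (\<Sum>i<N. \<Prod>j\<in>{..<N}-{i}. exp (\<kappa> * log_kernel C (X i - X j)))"
proof -
  define y where "y i = \<kappa> * (\<Sum>j\<in>{..<N}-{i}. log_kernel C (X i - X j))" for i
  have "\<kappa> * N * kernel_interaction N C X = (1 / real N) * (\<Sum>i<N. y i)"
    using assms by (simp add: kernel_interaction_def y_def sum_distrib_left power2_eq_square)
  then have "exp (\<kappa> * N * kernel_interaction N C X) \<le> (1 / real N) * (\<Sum>i<N. exp (y i))"
    using exp_average_le_average_exp[OF assms] by simp
  also have "\<dots> = (1 / real N) * (\<Sum>i<N. \<Prod>j\<in>{..<N}-{i}. exp (\<kappa> * log_kernel C (X i - X j)))"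
    by (simp add: y_def sum_distrib_left exp_sum)
  finally show ?thesis .
qed

lemma nn_integral_tensor_dens_exp_kernel_interaction_le:
  fixes \<kappa> C :: real and \<rho> :: "real^'d::finite \<Rightarrow> real"
  assumes \<rho>: "\<rho> \<in> borel_measurable torus" "\<And>x. 0 \<le> \<rho> x" "(\<integral>\<^sup>+x. \<rho> x \<partial>torus) = 1"
    and M: "AE x in torus. \<rho> x \<le> M" "0 \<le> M"
    and A: "\<And>y :: real^'d. y \<in> torus_cell \<Longrightarrow> (\<integral>\<^sup>+x. exp (\<kappa> * log_kernel C (y - x)) \<partial>torus) \<le> ennreal A"
      "0 \<le> A"
    and N: "0 < N"
  shows "(\<integral>\<^sup>+X. tensor_dens N \<rho> X * exp (\<kappa> * N * kernel_interaction N C X) \<partial>config N)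
    \<le> ennreal ((M * A) ^ (N - 1))"
proof -
  let ?P = "\<lambda>i X. tensor_dens N \<rho> X * (\<Prod>j\<in>{..<N}-{i}. exp (\<kappa> * log_kernel C (X i - X j)))"
  have P_nonneg: "0 \<le> ?P i X" for i X
    using \<rho>(2) by (intro mult_nonneg_nonneg prod_nonneg tensor_dens_nonneg) auto
  have "(\<integral>\<^sup>+X. tensor_dens N \<rho> X * exp (\<kappa> * N * kernel_interaction N C X) \<partial>config N)
      \<le> (\<integral>\<^sup>+X. (\<Sum>i<N. ennreal (1 / real N) * ?P i X) \<partial>config N)"
  proof (rule nn_integral_mono)
    fix X :: "nat \<Rightarrow> real^'d"
    have "tensor_dens N \<rho> X * exp (\<kappa> * N * kernel_interaction N C X)
        \<le> tensor_dens N \<rho> X * ((1 / real N) * (\<Sum>i<N. \<Prod>j\<in>{..<N}-{i}. exp (\<kappa> * log_kernel C (X i - X j))))"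
      using \<rho>(2) by (intro mult_left_mono exp_kernel_interaction_le N tensor_dens_nonneg)
    also have "\<dots> = (\<Sum>i<N. (1 / real N) * ?P i X)"
      by (simp add: sum_distrib_left algebra_simps)
    finally have "tensor_dens N \<rho> X * exp (\<kappa> * N * kernel_interaction N C X) \<le> (\<Sum>i<N. (1 / real N) * ?P i X)" .
    then show "ennreal (tensor_dens N \<rho> X * exp (\<kappa> * N * kernel_interaction N C X)) \<le> (\<Sum>i<N. ennreal (1 / real N) * ?P i X)"
      using P_nonneg by (auto simp: ennreal_mult[symmetric] sum_ennreal intro!: ennreal_leI)
  qed
  also have "\<dots> = (\<Sum>i<N. ennreal (1 / real N) * (\<integral>\<^sup>+X. ?P i X \<partial>config N))"
    using \<rho>(1) by (subst nn_integral_sum) (auto intro!: sum.cong nn_integral_cmult)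
  also have "\<dots> \<le> (\<Sum>i<N. ennreal (1 / real N) * ennreal ((M * A) ^ (N - 1)))"
    using \<rho> M A by (intro sum_mono mult_left_mono nn_integral_tensor_dens_prod_kernel_le) auto
  also have "\<dots> = ennreal ((M * A) ^ (N - 1))"
    using N M(2) A(2) by (simp add: ennreal_mult[symmetric] ennreal_of_nat_eq_real_of_nat)
  finally show ?thesis .
qed

lemma mult_ln_le_entropy_term:
  fixes u r B E :: real
  assumes "0 \<le> u" "0 \<le> r" "r = 0 \<Longrightarrow> u = 0" "0 < B" "0 < E"
  shows "u * ln E \<le> u * ln (u / r) + u * ln B - u + r * E / B"
proof (cases "u = 0")
  case True
  then show ?thesis
    using assms by simp
next
  case False
  then have u: "0 < u" and r: "0 < r"
    using assms by force+
  have "u * ln (r * E / (B * u)) \<le> u * (r * E / (B * u) - 1)"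
    using u r assms by (intro mult_left_mono ln_le_minus_one) auto
  also have "\<dots> = r * E / B - u"
    using u by (simp add: field_simps)
  finally have "u * ln (r * E / (B * u)) \<le> r * E / B - u" .
  moreover have "u * ln (r * E / (B * u)) = u * ln r + u * ln E - u * ln B - u * ln u"
    using u r assms by (simp add: ln_div ln_mult algebra_simps)
  moreover have "u * ln (u / r) = u * ln u - u * ln r"
    using u r by (simp add: ln_div algebra_simps)
  ultimately show ?thesis
    by linarith
qed

lemma integrable_integral_le_if_nn_integral_le:
  fixes f :: "'a \<Rightarrow> real"
  assumes "f \<in> borel_measurable M" "\<And>x. 0 \<le> f x" "(\<integral>\<^sup>+x. f x \<partial>M) \<le> ennreal B" "0 \<le> B"
  shows "integrable M f \<and> (\<integral>x. f x \<partial>M) \<le> B"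
proof
  show f: "integrable M f"
    using assms by (intro integrableI_bounded) (auto simp: top.not_eq_extremum intro: le_less_trans)
  have "ennreal (\<integral>x. f x \<partial>M) \<le> ennreal B"
    using assms(2,3) f by (simp add: nn_integral_eq_integral)
  then show "(\<integral>x. f x \<partial>M) \<le> B"
    using assms(4) by (simp add: ennreal_le_iff)
qed

lemma integral_le_rel_entropy_plus_ln_exp_moment:
  fixes \<rho> r F :: "'a \<Rightarrow> real"
  assumes \<rho>: "\<rho> \<in> borel_measurable M" "\<And>x. 0 \<le> \<rho> x" "integrable M \<rho>" "(\<integral>x. \<rho> x \<partial>M) = 1"
    and r: "r \<in> borel_measurable M" "\<And>x. 0 \<le> r x" "AE x in M. r x = 0 \<longrightarrow> \<rho> x = 0"
    and entropy: "integrable M (\<lambda>x. \<rho> x * ln (\<rho> x / r x))"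
    and F: "F \<in> borel_measurable M" "\<And>x. 0 \<le> F x"
    and B: "(\<integral>\<^sup>+x. r x * exp (F x) \<partial>M) \<le> ennreal B" "0 < B"
  shows "integrable M (\<lambda>x. \<rho> x * F x)
    \<and> (\<integral>x. \<rho> x * F x \<partial>M) \<le> (\<integral>x. \<rho> x * ln (\<rho> x / r x) \<partial>M) + ln B"
proof -
  have "integrable M (\<lambda>x. r x * exp (F x)) \<and> (\<integral>x. r x * exp (F x) \<partial>M) \<le> B"
    using r(1,2) F(1) B by (intro integrable_integral_le_if_nn_integral_le) auto
  then have moment: "integrable M (\<lambda>x. r x * exp (F x))" and moment_le: "(\<integral>x. r x * exp (F x) \<partial>M) \<le> B"
    by auto
  define R where "R x = \<rho> x * ln (\<rho> x / r x) + \<rho> x * ln B - \<rho> x + r x * exp (F x) / B" for x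
  have R: "integrable M R"
    unfolding R_def using entropy \<rho>(3) moment
    by (intro Bochner_Integration.integrable_add Bochner_Integration.integrable_diff
        integrable_mult_left integrable_divide)
  have \<rho>F_le_R: "AE x in M. \<rho> x * F x \<le> R x"
    using r(3)
  proof eventually_elim
    case (elim x)
    have "\<rho> x * ln (exp (F x)) \<le> R x"
      unfolding R_def using elim \<rho>(2) r(2) B(2) by (intro mult_ln_le_entropy_term) auto
    then show ?case
      by simp
  qed
  have \<rho>F: "integrable M (\<lambda>x. \<rho> x * F x)"
  proof (rule Bochner_Integration.integrable_bound[OF R])
    show "(\<lambda>x. \<rho> x * F x) \<in> borel_measurable M"
      using \<rho>(1) F(1) by measurable
    show "AE x in M. norm (\<rho> x * F x) \<le> norm (R x)"
      using \<rho>F_le_R by eventually_elim (use \<rho>(2) F(2) in simp)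
  qed
  have "(\<integral>x. \<rho> x * F x \<partial>M) \<le> (\<integral>x. R x \<partial>M)"
    using \<rho>F R \<rho>F_le_R by (rule integral_mono_AE)
  also have "\<dots> = (\<integral>x. \<rho> x * ln (\<rho> x / r x) \<partial>M) + ln B - 1 + (\<integral>x. r x * exp (F x) \<partial>M) / B"
    unfolding R_def using entropy \<rho>(3,4) moment
    by (simp add: Bochner_Integration.integral_add Bochner_Integration.integral_diff
        Bochner_Integration.integrable_add Bochner_Integration.integrable_diff
        integrable_mult_left integrable_divide integral_mult_left_zero integral_divide_zero)
  also have "\<dots> \<le> (\<integral>x. \<rho> x * ln (\<rho> x / r x) \<partial>M) + ln B"
    using moment_le B(2) by (simp add: divide_le_eq)
  finally show ?thesis
    using \<rho>F by simp
qed

lemma torus_cell_diff_lattice_eq: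
  fixes x y :: "real^'d::finite"
  assumes "x \<in> torus_cell" "y \<in> torus_cell" "x - y \<in> lattice"
  shows "x = y"
proof -
  have "(x - y) $ i = 0" for i
  proof -
    have "0 \<le> x $ i" "x $ i < 1" "0 \<le> y $ i" "y $ i < 1" "(x - y) $ i \<in> \<int>"
      using assms by (auto simp: lattice_def torus_cell_def)
    then show ?thesis
      by (intro Ints_nonzero_abs_less1) auto
  qed
  then show ?thesis
    by (simp add: vec_eq_iff)
qed

lemma space_config: "space (config N :: (nat \<Rightarrow> real^'d::finite) measure) = PiE {..<N} (\<lambda>_. torus_cell)"
  by (simp add: config_def space_PiM space_torus)

lemma abs_interaction_le_kernel_interaction:
  fixes X :: "nat \<Rightarrow> real^'d::finite"
  assumes X: "X \<in> space (config N)"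
    and V: "\<forall>x. x \<notin> lattice \<longrightarrow> \<bar>V x\<bar> \<le> ln (1 / tnorm x) + C"
  shows "\<bar>interaction N V X\<bar> \<le> kernel_interaction N C X"
proof -
  let ?t = "\<lambda>i j. if X i \<noteq> X j then V (X i - X j) else 0"
  have t_le: "\<bar>?t i j\<bar> \<le> log_kernel C (X i - X j)" if "i < N" "j < N" for i j
  proof (cases "X i = X j")
    case False
    then have "X i - X j \<notin> lattice"
      using X that torus_cell_diff_lattice_eq by (fastforce simp: space_config)
    then show ?thesis
      using V False by (auto simp: log_kernel_def)
  qed (simp add: log_kernel_def)
  have "\<bar>\<Sum>i<N. \<Sum>j<N. ?t i j\<bar> \<le> (\<Sum>i<N. \<Sum>j<N. \<bar>?t i j\<bar>)"
    by (rule order_trans[OF sum_abs sum_mono[OF sum_abs]])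
  also have "\<dots> = (\<Sum>i<N. \<Sum>j\<in>{..<N}-{i}. \<bar>?t i j\<bar>)"
  proof (rule sum.cong)
    fix i assume "i \<in> {..<N}"
    then show "(\<Sum>j<N. \<bar>?t i j\<bar>) = (\<Sum>j\<in>{..<N}-{i}. \<bar>?t i j\<bar>)"
      by (subst sum.remove[of _ i]) auto
  qed simp
  also have "\<dots> \<le> (\<Sum>i<N. \<Sum>j\<in>{..<N}-{i}. log_kernel C (X i - X j))"
    using t_le by (intro sum_mono) auto
  finally show ?thesis
    unfolding interaction_def kernel_interaction_def by (simp add: abs_mult divide_right_mono)
qed

lemma interaction_measurable [measurable]:
  assumes "V \<in> borel_measurable borel"
  shows "interaction N V \<in> borel_measurable (config N :: (nat \<Rightarrow> real^'d::finite) measure)"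
proof -
  have V0: "(\<lambda>z::real^'d. if z \<noteq> 0 then V z else 0) \<in> borel_measurable borel"
    using assms by measurable
  have "interaction N V = (\<lambda>X. (1 / (real N)^2) * (\<Sum>i<N. \<Sum>j<N. (\<lambda>z. if z \<noteq> 0 then V z else 0) (X i - X j)))"
    by (auto simp: interaction_def fun_eq_iff intro!: sum.cong)
  then show ?thesis
    by (simp only:)
      (intro borel_measurable_times borel_measurable_const borel_measurable_sum
        measurable_compose[OF borel_measurable_diff[OF config_component_measurable config_component_measurable] V0],
       auto)
qed

lemma AE_le_Linf_norm:
  assumes "esssup torus (\<lambda>x. ereal \<bar>f x\<bar>) < \<infinity>"
  shows "AE x in torus. f x \<le> Linf_norm f"
  using esssup_AE[of "\<lambda>x. ereal \<bar>f x\<bar>" torus]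
proof eventually_elim
  case (elim x)
  with assms obtain r where "esssup torus (\<lambda>x. ereal \<bar>f x\<bar>) = ereal r"
    by (cases "esssup torus (\<lambda>x. ereal \<bar>f x\<bar>)") auto
  with elim show ?case
    by (simp add: Linf_norm_def)
qed

lemma nonneg_if_AE_density_le:
  assumes "AE x in M. \<rho> x \<le> c" "\<And>x. 0 \<le> \<rho> x" "(\<integral>\<^sup>+x. ennreal (\<rho> x) \<partial>M) = 1"
  shows "0 \<le> (c :: real)"
proof (rule ccontr)
  assume "\<not> 0 \<le> c"
  with assms(1,2) have "AE x in M. ennreal (\<rho> x) = 0"
    by (auto elim!: eventually_mono dest: order_trans)
  then have "(\<integral>\<^sup>+x. ennreal (\<rho> x) \<partial>M) = 0"
    by (simp add: nn_integral_cong_AE)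
  with assms(3) show False
    by simp
qed

lemma ln_max_1_power_le:
  assumes "0 \<le> (P :: real)"
  shows "ln (max 1 (P ^ (N - 1))) \<le> real N * P"
proof (cases "P ^ (N - 1) \<le> 1")
  case False
  then have P: "0 < P"
    using assms by (cases "P = 0") (auto simp: power_0_left split: if_splits)
  have "ln (max 1 (P ^ (N - 1))) = real (N - 1) * ln P"
    using False P by (simp add: ln_realpow)
  also have "\<dots> \<le> real (N - 1) * P"
    using ln_le_minus_one[OF P] by (intro mult_left_mono) auto
  also have "\<dots> \<le> real N * P"
    using P by (intro mult_right_mono) auto
  finally show ?thesis .
qed (use assms in simp)

lemma expected_kernel_interaction_le_rel_entropy:
  fixes \<kappa> C A M :: real and \<rho>bar :: "real^'d::finite \<Rightarrow> real" and \<rho>N :: "(nat \<Rightarrow> real^'d) \<Rightarrow> real"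
  assumes \<kappa>: "0 < \<kappa>"
    and A: "\<And>y :: real^'d. y \<in> torus_cell \<Longrightarrow> (\<integral>\<^sup>+x. exp (\<kappa> * log_kernel C (y - x)) \<partial>torus) \<le> ennreal A"
      "0 \<le> A"
    and \<rho>bar: "\<rho>bar \<in> borel_measurable torus" "\<forall>x. 0 \<le> \<rho>bar x" "(\<integral>\<^sup>+x. \<rho>bar x \<partial>torus) = 1"
      "AE x in torus. \<rho>bar x \<le> M" "0 \<le> M"
    and N: "0 < N"
    and \<rho>N: "\<rho>N \<in> borel_measurable (config N)" "\<forall>X. 0 \<le> \<rho>N X" "integrable (config N) \<rho>N"
      "(\<integral>X. \<rho>N X \<partial>config N) = 1" "AE X in config N. tensor_dens N \<rho>bar X = 0 \<longrightarrow> \<rho>N X = 0"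
      "integrable (config N) (\<lambda>X. \<rho>N X * ln (\<rho>N X / tensor_dens N \<rho>bar X))"
  shows "integrable (config N) (\<lambda>X. \<rho>N X * kernel_interaction N C X)
    \<and> \<kappa> * (\<integral>X. \<rho>N X * kernel_interaction N C X \<partial>config N) \<le> rel_entropy N \<rho>N \<rho>bar + M * A"
proof -
  define B where "B = max 1 ((M * A) ^ (N - 1))" \<comment> \<open>the maximum keeps \<open>ln B \<le> N M A\<close> valid when \<open>M A < 1\<close>\<close>
  have "(\<integral>\<^sup>+X. tensor_dens N \<rho>bar X * exp (\<kappa> * N * kernel_interaction N C X) \<partial>config N) \<le> ennreal B"
    using nn_integral_tensor_dens_exp_kernel_interaction_le[OF \<rho>bar(1) _ \<rho>bar(3-5) A N] \<rho>bar(2)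
    by (auto simp: B_def intro: order_trans)
  then have "integrable (config N) (\<lambda>X. \<rho>N X * (\<kappa> * N * kernel_interaction N C X))
    \<and> (\<integral>X. \<rho>N X * (\<kappa> * N * kernel_interaction N C X) \<partial>config N)
       \<le> (\<integral>X. \<rho>N X * ln (\<rho>N X / tensor_dens N \<rho>bar X) \<partial>config N) + ln B"
    using \<rho>N \<rho>bar(1,2) \<kappa> kernel_interaction_nonneg
    by (intro integral_le_rel_entropy_plus_ln_exp_moment tensor_dens_nonneg mult_nonneg_nonneg)
      (auto simp: B_def)
  moreover have "(\<lambda>X. \<rho>N X * (\<kappa> * N * kernel_interaction N C X)) = (\<lambda>X. (\<kappa> * N) * (\<rho>N X * kernel_interaction N C X))"
    by (simp add: fun_eq_iff ac_simps)
  moreover have "ln B \<le> N * (M * A)"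
    unfolding B_def using \<rho>bar(5) A(2) by (intro ln_max_1_power_le) simp
  moreover have "N * rel_entropy N \<rho>N \<rho>bar = (\<integral>X. \<rho>N X * ln (\<rho>N X / tensor_dens N \<rho>bar X) \<partial>config N)"
    using N by (simp add: rel_entropy_def)
  ultimately have "integrable (config N) (\<lambda>X. \<rho>N X * kernel_interaction N C X)"
    "N * (\<kappa> * (\<integral>X. \<rho>N X * kernel_interaction N C X \<partial>config N)) \<le> N * (rel_entropy N \<rho>N \<rho>bar + M * A)"
    using \<kappa> N by (auto simp: algebra_simps)
  then show ?thesis
    using N by (simp add: mult_le_cancel_left_pos)
qed

lemma expected_interaction_le_rel_entropy:
  fixes \<kappa> C A :: real and V \<rho>bar :: "real^'d::finite \<Rightarrow> real" and \<rho>N :: "(nat \<Rightarrow> real^'d) \<Rightarrow> real"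
  assumes \<kappa>: "0 < \<kappa>"
    and A: "\<And>y :: real^'d. y \<in> torus_cell \<Longrightarrow> (\<integral>\<^sup>+x. exp (\<kappa> * log_kernel C (y - x)) \<partial>torus) \<le> ennreal A"
      "0 \<le> A"
    and V: "V \<in> borel_measurable borel" "\<forall>x. x \<notin> lattice \<longrightarrow> \<bar>V x\<bar> \<le> ln (1 / tnorm x) + C"
    and \<rho>bar: "\<rho>bar \<in> borel_measurable torus" "\<forall>x. 0 \<le> \<rho>bar x" "integrable torus \<rho>bar"
      "(\<integral>x. \<rho>bar x \<partial>torus) = 1" "esssup torus (\<lambda>x. ereal \<bar>\<rho>bar x\<bar>) < \<infinity>"
    and N: "0 < N"
    and \<rho>N: "\<rho>N \<in> borel_measurable (config N)" "\<forall>X. 0 \<le> \<rho>N X" "integrable (config N) \<rho>N"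
      "(\<integral>X. \<rho>N X \<partial>config N) = 1" "AE X in config N. tensor_dens N \<rho>bar X = 0 \<longrightarrow> \<rho>N X = 0"
      "integrable (config N) (\<lambda>X. \<rho>N X * ln (\<rho>N X / tensor_dens N \<rho>bar X))"
  shows "integrable (config N) (\<lambda>X. \<rho>N X * interaction N V X)
    \<and> (\<integral>X. \<rho>N X * interaction N V X \<partial>config N)
        \<le> (1 / \<kappa>) * rel_entropy N \<rho>N \<rho>bar + A / \<kappa> * Linf_norm \<rho>bar"
proof -
  define M where "M = Linf_norm \<rho>bar"
  have \<rho>bar_le: "AE x in torus. \<rho>bar x \<le> M"
    unfolding M_def using \<rho>bar(5) by (rule AE_le_Linf_norm)
  have \<rho>bar_prob: "(\<integral>\<^sup>+x. \<rho>bar x \<partial>torus) = 1"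
    using \<rho>bar(2-4) by (simp add: nn_integral_eq_integral)
  have M: "0 \<le> M"
    using nonneg_if_AE_density_le[OF \<rho>bar_le _ \<rho>bar_prob] \<rho>bar(2) by blast
  have G: "integrable (config N) (\<lambda>X. \<rho>N X * kernel_interaction N C X)"
    "\<kappa> * (\<integral>X. \<rho>N X * kernel_interaction N C X \<partial>config N) \<le> rel_entropy N \<rho>N \<rho>bar + M * A"
    using expected_kernel_interaction_le_rel_entropy[OF \<kappa> A \<rho>bar(1,2) \<rho>bar_prob \<rho>bar_le M N \<rho>N] by auto
  have dominated: "\<bar>\<rho>N X * interaction N V X\<bar> \<le> \<rho>N X * kernel_interaction N C X" if "X \<in> space (config N)" for X
    using abs_interaction_le_kernel_interaction[OF that V(2)] \<rho>N(2) by (simp add: abs_mult mult_left_mono)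
  have F: "integrable (config N) (\<lambda>X. \<rho>N X * interaction N V X)"
    using \<rho>N(1) V(1) dominated
    by (intro Bochner_Integration.integrable_bound[OF G(1)]) (auto intro!: AE_I2 intro: order_trans[OF _ abs_ge_self])
  have "(\<integral>X. \<rho>N X * interaction N V X \<partial>config N) \<le> (\<integral>X. \<rho>N X * kernel_interaction N C X \<partial>config N)"
    using F G(1) dominated by (intro integral_mono) (auto dest: abs_le_D1)
  also have "\<dots> \<le> (1 / \<kappa>) * rel_entropy N \<rho>N \<rho>bar + A / \<kappa> * M"
    using G(2) \<kappa> by (simp add: field_simps)
  finally show ?thesis
    using F by (simp add: M_def)
qed

theorem mainTheorem8:
  fixes C \<kappa> :: real
  assumes "0 < \<kappa>" and "\<kappa> < real CARD('d::finite)"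
  shows "\<exists>Cd::real. \<forall>(V :: real ^ 'd \<Rightarrow> real) (\<rho>bar :: real ^ 'd \<Rightarrow> real)
            (N :: nat) (\<rho>N :: (nat \<Rightarrow> real ^ 'd) \<Rightarrow> real).
     V \<in> borel_measurable borel \<and> periodic V \<and>
     (\<forall>x. x \<notin> lattice \<longrightarrow> \<bar>V x\<bar> \<le> ln (1 / tnorm x) + C) \<and>
     \<rho>bar \<in> borel_measurable torus \<and> (\<forall>x. 0 \<le> \<rho>bar x) \<and>
     integrable torus \<rho>bar \<and> (\<integral>x. \<rho>bar x \<partial>torus) = 1 \<and>
     esssup torus (\<lambda>x. ereal \<bar>\<rho>bar x\<bar>) < \<infinity> \<and>
     0 < N \<and>
     \<rho>N \<in> borel_measurable (config N) \<and> (\<forall>X. 0 \<le> \<rho>N X) \<and>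
     integrable (config N) \<rho>N \<and> (\<integral>X. \<rho>N X \<partial>config N) = 1 \<and>
     (AE X in config N. tensor_dens N \<rho>bar X = 0 \<longrightarrow> \<rho>N X = 0) \<and>
     integrable (config N) (\<lambda>X. \<rho>N X * ln (\<rho>N X / tensor_dens N \<rho>bar X))
     \<longrightarrow>
     integrable (config N) (\<lambda>X. \<rho>N X * interaction N V X) \<and>
     (\<integral>X. \<rho>N X * interaction N V X \<partial>config N)
        \<le> (1 / \<kappa>) * rel_entropy N \<rho>N \<rho>bar + Cd * Linf_norm \<rho>bar"
proof -
  define s where "s = \<kappa> / CARD('d)"
  have s: "0 \<le> s" "s < 1" "s * CARD('d) = \<kappa>"
    using assms by (auto simp: s_def field_simps)
  define A where "A = 1 + exp (\<kappa> * C) * (6 * (3 powr (1 - s) / (1 - s))) ^ CARD('d)"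
  have A: "\<And>y :: real^'d. y \<in> torus_cell \<Longrightarrow> (\<integral>\<^sup>+x. exp (\<kappa> * log_kernel C (y - x)) \<partial>torus) \<le> ennreal A"
    "0 \<le> A"
    using nn_integral_exp_log_kernel_le[OF s(1,2)] s by (auto simp: A_def)
  show ?thesis
    by (intro exI[of _ "A / \<kappa>"] allI impI, elim conjE,
        intro expected_interaction_le_rel_entropy[OF assms(1) A]; assumption)
qed

end
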